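(* Let $D>0$, let $M,L,p\in\mathbb{N}$ with $L\geq 1$, $M\geq 1$ and $p\geq 2$, and let $X=[0,D]^M$ with the Euclidean distance $d$. Endow $X^p$ with the maximum metric $d_{\max}((x_1,\dots,x_p),(y_1,\dots,y_p))=\max_{1\le j\le p} d(x_j,y_j)$. Let $f_1,\dots,f_L:X^p\to X$ be contractions, i.e. Lipschitz maps with respect to $d_{\max}$ and $d$ with Lipschitz constants $\mathrm{lip}(f_i)<1$, and put $C=\max\{\mathrm{lip}(f_1),\dots,\mathrm{lip}(f_L)\}<1$. Let $A_{\mathcal{F}}$ be the unique nonempty compact set $A\subseteq X$ satisfying $A=\bigcup_{i=1}^{L} f_i(A\times\cdots\times A)$ ($p$ factors). Let $(n_k)_{k\ge 1}$ be a sequence of positive integers and put $\varepsilon_k=\frac{D\sqrt{M}}{n_k}$. Let $K_0\subseteq X$ be a nonempty finite set, put $\tilde A_0=K_0$ and, for $k\ge 1$, $$\tilde A_k=\Big\{\tfrac{D}{n_k}\Big[\tfrac{n_k}{D}f_l(u_1,\dots,u_p)\Big] \;\Big|\; u_1,\dots,u_p\in\tilde A_{k-1},\ l\in\{1,\dots,L\}\Big\},$$ where for $x=(x_1,\dots,x_M)\in\mathbb{R}^M$ we write $[x]=([x_1],\dots,[x_M])$, with $[t]$ the greatest integer $\le t$. Then for every $k\in\mathbb{N}$, $k\ge 1$, $$h(\tilde A_k,A_{\mathcal{F}})\le \varepsilon_k+C\varepsilon_{k-1}+C^2\varepsilon_{k-2}+\cdots+C^{k-1}\varepsilon_1+C^k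 D\sqrt{M},$$ where $h$ denotes the Hausdorff–Pompeiu metric on nonempty compact subsets of $X$.
   Context: For nonempty compact $K_1,K_2\subseteq X$, $d(K_1,K_2)=\sup_{x\in K_1}\inf_{y\in K_2}d(x,y)$ and the Hausdorff–Pompeiu distance is $h(K_1,K_2)=\max\{d(K_1,K_2),d(K_2,K_1)\}$. The sets $\tilde A_k$ are the successive outputs of the "grid algorithm": at each step every map $f_l$ is applied to all $p$-tuples of points from the previous set, and each resulting point is replaced by the lower-left corner of the cell of the grid of mesh $D/n_k$ containing it. *)

theory Defs
  imports "HOL-Analysis.Analysis"
begin

text \<open>The cube X = [0,D]^M, with M = CARD('m).\<close>
definition cube :: "real \<Rightarrow> (real^'m) set" where
  "cube D = {x. \<forall>i. 0 \<le> x $ i \<and> x $ i \<le> D}"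

text \<open>p-tuples are functions from a finite index type 'p (p = CARD('p)).\<close>
definition tuples :: "'a set \<Rightarrow> ('p::finite \<Rightarrow> 'a) set" where
  "tuples A = {u. \<forall>j. u j \<in> A}"

definition dmax :: "('p::finite \<Rightarrow> 'a::metric_space) \<Rightarrow> ('p \<Rightarrow> 'a) \<Rightarrow> real" where
  "dmax u v = Max (range (\<lambda>j. dist (u j) (v j)))"

definition lip :: "('p::finite \<Rightarrow> 'a::metric_space) set \<Rightarrow> (('p \<Rightarrow> 'a) \<Rightarrow> 'a) \<Rightarrow> real" where
  "lip S g = Inf {c. 0 \<le> c \<and> (\<forall>u\<in>S. \<forall>v\<in>S. dist (g u) (g v) \<le> c * dmax u v)}"

definition ddist :: "'a::metric_space set \<Rightarrow> 'a set \<Rightarrow> real" where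
  "ddist K1 K2 = (SUP x\<in>K1. INF y\<in>K2. dist x y)"

definition hpdist :: "'a::metric_space set \<Rightarrow> 'a set \<Rightarrow> real" where
  "hpdist K1 K2 = max (ddist K1 K2) (ddist K2 K1)"

definition grid_round :: "real \<Rightarrow> nat \<Rightarrow> real^'m \<Rightarrow> real^'m" where
  "grid_round D n x = (D / real n) *\<^sub>R (\<chi> i. of_int \<lfloor>(real n / D) * x $ i\<rfloor>)"

primrec grid_alg ::
  "real \<Rightarrow> (nat \<Rightarrow> nat) \<Rightarrow> nat \<Rightarrow> (nat \<Rightarrow> ('p::finite \<Rightarrow> real^'m) \<Rightarrow> real^'m)
    \<Rightarrow> (real^'m) set \<Rightarrow> nat \<Rightarrow> (real^'m) set" where
  "grid_alg D n L f K0 0 = K0"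
| "grid_alg D n L f K0 (Suc k) =
     {grid_round D (n (Suc k)) (f l u) | u l. u \<in> tuples (grid_alg D n L f K0 k) \<and> l \<in> {1..L}}"

end

theory Submission
  imports Defs
begin

text \<open>Grid rounding moves a point of \<open>X\<close> by at most \<open>\<epsilon>\<^sub>k = D \<surd>M / n\<^sub>k\<close> and keeps it in \<open>X\<close>, and a
  map with Lipschitz constant \<open>C\<close> in each tuple argument changes Hausdorff distances of the
  arguments by at most the factor \<open>C\<close>, because every coordinate of a tuple from one set has a
  nearest point in the other (compact) set. Hence one step of the grid algorithm satisfies
  \<open>h(\<tilde>A\<^sub>k, A) \<le> \<epsilon>\<^sub>k + C h(\<tilde>A\<^sub>k\<^sub>-\<^sub>1, A)\<close>, using \<open>A = \<Union>\<^sub>l f\<^sub>l(A\<^sup>p)\<close>, and unrolling this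
  recursion down to \<open>h(K\<^sub>0, A) \<le> diam X = D \<surd>M\<close> gives the bound.\<close>

lemma norm_le_sqrt_card_if_components_le:
  fixes x :: "real^'m"
  assumes "\<And>i. \<bar>x $ i\<bar> \<le> c"
  shows "norm x \<le> c * sqrt (real CARD('m))"
proof -
  have c_nonneg: "0 \<le> c" using assms[of undefined] by linarith
  have "(\<Sum>i\<in>UNIV. (norm (x $ i))\<^sup>2) \<le> (\<Sum>i\<in>(UNIV::'m set). c\<^sup>2)"
    using assms by (intro sum_mono) (simp, metis abs_ge_zero power2_abs power_mono)
  also have "\<dots> = real CARD('m) * c\<^sup>2" by simp
  finally have "norm x \<le> sqrt (real CARD('m) * c\<^sup>2)"
    unfolding norm_vec_def L2_set_def by (rule real_sqrt_le_mono)
  also have "\<dots> = c * sqrt (real CARD('m))" using c_nonneg by (simp add: real_sqrt_mult)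
  finally show ?thesis .
qed

lemma dist_le_in_cube:
  fixes x y :: "real^'m"
  assumes "x \<in> cube D" "y \<in> cube D"
  shows "dist x y \<le> D * sqrt (real CARD('m))"
  unfolding dist_norm
proof (rule norm_le_sqrt_card_if_components_le)
  fix i
  have "0 \<le> x $ i" "x $ i \<le> D" "0 \<le> y $ i" "y $ i \<le> D"
    using assms by (auto simp: cube_def)
  then show "\<bar>(x - y) $ i\<bar> \<le> D" by simp
qed

lemma dist_grid_round_le:
  fixes x :: "real^'m"
  assumes "D > 0" "N > 0"
  shows "dist (grid_round D N x) x \<le> D * sqrt (real CARD('m)) / real N"
proof -
  have "\<bar>(grid_round D N x - x) $ i\<bar> \<le> D / real N" for i
  proof -
    define t where "t = real N / D * x $ i"
    have "(grid_round D N x - x) $ i = D / real N * (of_int \<lfloor>t\<rfloor> - t)"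
      using assms by (simp add: grid_round_def t_def right_diff_distrib)
    then have "\<bar>(grid_round D N x - x) $ i\<bar> = D / real N * \<bar>of_int \<lfloor>t\<rfloor> - t\<bar>"
      using assms by (simp add: abs_mult)
    also have "\<dots> \<le> D / real N * 1"
      using assms by (intro mult_left_mono) (linarith, simp)
    finally show ?thesis by simp
  qed
  then show ?thesis
    unfolding dist_norm using norm_le_sqrt_card_if_components_le by fastforce
qed

lemma grid_round_in_cube:
  fixes x :: "real^'m"
  assumes "D > 0" "N > 0" "x \<in> cube D"
  shows "grid_round D N x \<in> cube D"
  unfolding cube_def
proof (intro CollectI allI conjI)
  fix i
  define t where "t = real N / D * x $ i"
  have "0 \<le> t" "t \<le> real N"
    using assms by (auto simp: cube_def t_def field_simps)
  then have floor_bounds: "0 \<le> real_of_int \<lfloor>t\<rfloor>" "real_of_int \<lfloor>t\<rfloor> \<le> real N"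
    by simp_all linarith
  have component: "grid_round D N x $ i = D / real N * of_int \<lfloor>t\<rfloor>"
    by (simp add: grid_round_def t_def)
  show "0 \<le> grid_round D N x $ i"
    using component floor_bounds assms by simp
  have "D / real N * of_int \<lfloor>t\<rfloor> \<le> D / real N * real N"
    using floor_bounds assms by (intro mult_left_mono) auto
  then show "grid_round D N x $ i \<le> D"
    using component assms by simp
qed

lemma ddist_le:
  fixes K1 K2 :: "'a::metric_space set"
  assumes "K1 \<noteq> {}" "K2 \<noteq> {}" "\<And>x. x \<in> K1 \<Longrightarrow> \<exists>y\<in>K2. dist x y \<le> r"
  shows "ddist K1 K2 \<le> r"
  unfolding ddist_def
proof (rule cSUP_least[OF assms(1)])
  fix x assume "x \<in> K1"
  then obtain y where y: "y \<in> K2" "dist x y \<le> r" using assms(3) by blast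
  have "(INF y\<in>K2. dist x y) \<le> dist x y"
    by (rule cINF_lower[OF _ y(1)]) (auto intro: bdd_belowI[where m=0])
  then show "(INF y\<in>K2. dist x y) \<le> r" using y by simp
qed

text \<open>Without the bound \<open>B\<close> the supremum defining \<open>ddist K1 K2\<close> could be unbounded, hence a junk value.\<close>

lemma exists_dist_le_ddist:
  fixes K1 K2 :: "'a::heine_borel set"
  assumes "compact K2" "K2 \<noteq> {}" "x \<in> K1"
    and "\<And>a b. a \<in> K1 \<Longrightarrow> b \<in> K2 \<Longrightarrow> dist a b \<le> B"
  shows "\<exists>y\<in>K2. dist x y \<le> ddist K1 K2"
proof -
  obtain y where y: "y \<in> K2" "infdist x K2 = dist x y"
    using infdist_attains_inf[of K2 x] assms compact_imp_closed by blast
  have inf_eq: "\<And>a. (INF b\<in>K2. dist a b) = infdist a K2"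
    using assms(2) by (simp add: infdist_def)
  have "bdd_above ((\<lambda>a. INF b\<in>K2. dist a b) ` K1)"
  proof (rule bdd_aboveI[where M=B])
    fix t assume "t \<in> (\<lambda>a. INF b\<in>K2. dist a b) ` K1"
    then obtain a where a: "a \<in> K1" "t = infdist a K2" using inf_eq by auto
    obtain b where "b \<in> K2" using assms(2) by blast
    then show "t \<le> B" using a infdist_le[of b K2 a] assms(4)[of a b] by simp
  qed
  then have "(INF b\<in>K2. dist x b) \<le> ddist K1 K2"
    unfolding ddist_def by (rule cSUP_upper[OF assms(3)])
  then show ?thesis using y inf_eq by metis
qed

lemma dmax_nonneg: "0 \<le> dmax (u::'p::finite \<Rightarrow> 'a::metric_space) v"
  unfolding dmax_def
  by (rule order.trans[OF zero_le_dist[of "u undefined" "v undefined"]]) (rule Max_ge, auto)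

lemma dmax_commute: "dmax u v = dmax v u"
  unfolding dmax_def by (simp add: dist_commute)

lemma dmax_le:
  fixes u v :: "'p::finite \<Rightarrow> 'a::metric_space"
  assumes "\<And>j. dist (u j) (v j) \<le> e"
  shows "dmax u v \<le> e"
  unfolding dmax_def using assms by (subst Max_le_iff) auto

lemma tuples_mono: "A \<subseteq> B \<Longrightarrow> tuples A \<subseteq> tuples B"
  by (auto simp: tuples_def)

lemma finite_tuples: "finite B \<Longrightarrow> finite (tuples B :: ('p::finite \<Rightarrow> 'a) set)"
proof -
  assume "finite B"
  have "(tuples B :: ('p \<Rightarrow> 'a) set) = PiE UNIV (\<lambda>_. B)"
    by (auto simp: tuples_def PiE_def Pi_def extensional_def)
  then show ?thesis using \<open>finite B\<close> by (auto intro!: finite_PiE)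
qed

lemma exists_tuple_dmax_le_ddist:
  fixes K1 K2 :: "'a::heine_borel set"
  assumes "compact K2" "K2 \<noteq> {}" "u \<in> tuples K1"
    and "\<And>a b. a \<in> K1 \<Longrightarrow> b \<in> K2 \<Longrightarrow> dist a b \<le> B"
  shows "\<exists>v\<in>tuples K2. dmax u v \<le> ddist K1 K2"
proof -
  have "\<exists>b\<in>K2. dist (u j) b \<le> ddist K1 K2" for j
    using assms(3) by (intro exists_dist_le_ddist[OF assms(1,2) _ assms(4)]) (auto simp: tuples_def)
  then obtain v where "\<And>j. v j \<in> K2" "\<And>j. dist (u j) (v j) \<le> ddist K1 K2" by metis
  then show ?thesis by (auto simp: tuples_def intro!: dmax_le)
qed

lemma lip_nonneg:
  assumes "\<exists>c. 0 \<le> c \<and> (\<forall>u\<in>S. \<forall>v\<in>S. dist (g u) (g v) \<le> c * dmax u v)"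
  shows "0 \<le> lip S g"
  unfolding lip_def by (rule cInf_greatest) (use assms in auto)

lemma dist_le_lip_dmax:
  fixes g :: "('p::finite \<Rightarrow> 'a::metric_space) \<Rightarrow> 'a"
  assumes ex: "\<exists>c. 0 \<le> c \<and> (\<forall>u\<in>S. \<forall>v\<in>S. dist (g u) (g v) \<le> c * dmax u v)"
    and uv: "u \<in> S" "v \<in> S"
  shows "dist (g u) (g v) \<le> lip S g * dmax u v"
proof (cases "dmax u v = 0")
  case True
  then show ?thesis using ex uv by force
next
  case False
  let ?Lips = "{c. 0 \<le> c \<and> (\<forall>u\<in>S. \<forall>v\<in>S. dist (g u) (g v) \<le> c * dmax u v)}"
  have pos: "dmax u v > 0" using False dmax_nonneg[of u v] by simp
  have "dist (g u) (g v) / dmax u v \<le> Inf ?Lips"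
  proof (rule cInf_greatest)
    show "?Lips \<noteq> {}" using ex by blast
    show "dist (g u) (g v) / dmax u v \<le> c" if "c \<in> ?Lips" for c
      using that uv pos by (simp add: divide_le_eq)
  qed
  then show ?thesis using pos unfolding lip_def by (simp add: divide_le_eq)
qed

text \<open>Both directions of the grid step are instances: \<open>F\<close> the rounded maps and \<open>G\<close> the maps
  themselves, or vice versa.\<close>

lemma ddist_tuple_images_le:
  fixes K1 K2 :: "'a::heine_borel set"
    and F G :: "'i \<Rightarrow> ('p::finite \<Rightarrow> 'a) \<Rightarrow> 'b::metric_space"
  assumes "compact K2" "K1 \<noteq> {}" "K2 \<noteq> {}" "I \<noteq> {}" "0 \<le> C"
    and bounded: "\<And>a b. a \<in> K1 \<Longrightarrow> b \<in> K2 \<Longrightarrow> dist a b \<le> B"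
    and close: "\<And>l u v. l \<in> I \<Longrightarrow> u \<in> tuples K1 \<Longrightarrow> v \<in> tuples K2 \<Longrightarrow>
                  dist (F l u) (G l v) \<le> r + C * dmax u v"
  shows "ddist {F l u | u l. u \<in> tuples K1 \<and> l \<in> I} {G l v | v l. v \<in> tuples K2 \<and> l \<in> I}
           \<le> r + C * ddist K1 K2"
proof (rule ddist_le)
  have "tuples K \<noteq> {}" if "K \<noteq> {}" for K :: "'a set"
    using that by (auto simp: tuples_def)
  then show "{F l u | u l. u \<in> tuples K1 \<and> l \<in> I} \<noteq> {}"
    and "{G l v | v l. v \<in> tuples K2 \<and> l \<in> I} \<noteq> {}"
    using assms(2-4) by blast+
next
  fix x assume "x \<in> {F l u | u l. u \<in> tuples K1 \<and> l \<in> I}"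
  then obtain u l where x: "x = F l u" and u: "u \<in> tuples K1" and l: "l \<in> I" by blast
  obtain v where v: "v \<in> tuples K2" "dmax u v \<le> ddist K1 K2"
    using exists_tuple_dmax_le_ddist[OF assms(1,3) u bounded] by blast
  have "dist x (G l v) \<le> r + C * ddist K1 K2"
    using close[OF l u v(1)] mult_left_mono[OF v(2) \<open>0 \<le> C\<close>] unfolding x by linarith
  then show "\<exists>y\<in>{G l v | v l. v \<in> tuples K2 \<and> l \<in> I}. dist x y \<le> r + C * ddist K1 K2"
    using v(1) l by blast
qed

lemma hpdist_grid_step_le:
  fixes f :: "nat \<Rightarrow> ('p::finite \<Rightarrow> real^'m) \<Rightarrow> real^'m" and A B :: "(real^'m) set"
  assumes "D > 0" "N > 0" "L \<ge> 1" "0 \<le> C"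
    and f_lipschitz: "\<And>l u v. l \<in> {1..L} \<Longrightarrow> u \<in> tuples (cube D) \<Longrightarrow> v \<in> tuples (cube D) \<Longrightarrow>
                        dist (f l u) (f l v) \<le> C * dmax u v"
    and A: "A \<subseteq> cube D" "A \<noteq> {}" "compact A" "A = (\<Union>l\<in>{1..L}. f l ` tuples A)"
    and B: "B \<subseteq> cube D" "B \<noteq> {}" "finite B"
  shows "hpdist {grid_round D N (f l u) | u l. u \<in> tuples B \<and> l \<in> {1..L}} A
           \<le> D * sqrt (real CARD('m)) / real N + C * hpdist B A"
proof -
  let ?r = "D * sqrt (real CARD('m)) / real N"
  let ?G = "{grid_round D N (f l u) | u l. u \<in> tuples B \<and> l \<in> {1..L}}"
  let ?FA = "{f l v | v l. v \<in> tuples A \<and> l \<in> {1..L}}"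
  have A_image: "?FA = A"
    using A(4) by blast
  have bounded: "dist a b \<le> D * sqrt (real CARD('m))" if "a \<in> A \<union> B" "b \<in> A \<union> B" for a b
    using that A(1) B(1) by (intro dist_le_in_cube) auto
  have close: "dist (grid_round D N (f l u)) (f l v) \<le> ?r + C * dmax u v"
    if "l \<in> {1..L}" "u \<in> tuples B" "v \<in> tuples A" for l u v
    using dist_triangle[of "grid_round D N (f l u)" "f l v" "f l u"]
      dist_grid_round_le[OF assms(1,2), of "f l u"]
      f_lipschitz[OF that(1)] that(2,3) tuples_mono[OF A(1)] tuples_mono[OF B(1)]
    by fastforce
  have close': "dist (f l v) (grid_round D N (f l u)) \<le> ?r + C * dmax v u"
    if "l \<in> {1..L}" "u \<in> tuples B" "v \<in> tuples A" for l u v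
    using close[OF that] by (metis dist_commute dmax_commute)
  have "compact B" using B(3) by (rule finite_imp_compact)
  have "ddist ?G ?FA \<le> ?r + C * ddist B A"
    by (rule ddist_tuple_images_le[where B = "D * sqrt (real CARD('m))"])
      (use assms \<open>compact B\<close> close bounded in \<open>auto\<close>)
  moreover have "ddist ?FA ?G \<le> ?r + C * ddist A B"
    by (rule ddist_tuple_images_le[where B = "D * sqrt (real CARD('m))"])
      (use assms \<open>compact B\<close> close' bounded in \<open>auto\<close>)
  moreover have "C * ddist B A \<le> C * hpdist B A" "C * ddist A B \<le> C * hpdist B A"
    using \<open>0 \<le> C\<close> by (auto simp: hpdist_def intro: mult_left_mono)
  ultimately show ?thesis
    unfolding hpdist_def A_image by linarith
qed

lemma grid_alg_finite_nonempty_in_cube: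
  fixes f :: "nat \<Rightarrow> ('p::finite \<Rightarrow> real^'m) \<Rightarrow> real^'m"
  assumes "D > 0" "L \<ge> 1" "\<And>j. j \<ge> 1 \<Longrightarrow> n j > 0"
    and f_maps: "\<And>l. l \<in> {1..L} \<Longrightarrow> f l ` tuples (cube D) \<subseteq> cube D"
    and "finite K0" "K0 \<noteq> {}" "K0 \<subseteq> cube D"
  shows "finite (grid_alg D n L f K0 k) \<and> grid_alg D n L f K0 k \<noteq> {}
           \<and> grid_alg D n L f K0 k \<subseteq> cube D"
proof (induction k)
  case 0
  then show ?case using assms by simp
next
  case (Suc k)
  let ?B = "grid_alg D n L f K0 k"
  have step_image: "grid_alg D n L f K0 (Suc k)
      = (\<lambda>(u, l). grid_round D (n (Suc k)) (f l u)) ` (tuples ?B \<times> {1..L})"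
    by auto blast
  have "tuples ?B \<noteq> {}" using Suc by (auto simp: tuples_def)
  moreover have "f l u \<in> cube D" if "l \<in> {1..L}" "u \<in> tuples ?B" for l u
    using f_maps[OF that(1)] tuples_mono[of ?B "cube D"] that(2) Suc by blast
  ultimately show ?case
    unfolding step_image using Suc assms
    by (auto simp: finite_tuples intro!: grid_round_in_cube)
qed

lemma hpdist_grid_alg_le:
  fixes f :: "nat \<Rightarrow> ('p::finite \<Rightarrow> real^'m) \<Rightarrow> real^'m"
  assumes "D > 0" "L \<ge> 1" "0 \<le> C" "\<And>j. j \<ge> 1 \<Longrightarrow> n j > 0"
    and "\<And>l. l \<in> {1..L} \<Longrightarrow> f l ` tuples (cube D) \<subseteq> cube D"
    and "\<And>l u v. l \<in> {1..L} \<Longrightarrow> u \<in> tuples (cube D) \<Longrightarrow> v \<in> tuples (cube D) \<Longrightarrow>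
           dist (f l u) (f l v) \<le> C * dmax u v"
    and A: "A \<subseteq> cube D" "A \<noteq> {}" "compact A" "A = (\<Union>l\<in>{1..L}. f l ` tuples A)"
    and K0: "finite K0" "K0 \<noteq> {}" "K0 \<subseteq> cube D"
  shows "hpdist (grid_alg D n L f K0 k) A
           \<le> (\<Sum>j<k. C ^ j * (D * sqrt (real CARD('m)) / real (n (k - j))))
              + C ^ k * (D * sqrt (real CARD('m)))"
proof (induction k)
  case 0
  have "hpdist K0 A \<le> D * sqrt (real CARD('m))"
    unfolding hpdist_def using K0 A(1,2)
    by (intro max.boundedI ddist_le) (auto intro: dist_le_in_cube)
  then show ?case by simp
next
  case (Suc k)
  let ?r = "\<lambda>j. D * sqrt (real CARD('m)) / real (n j)"
  let ?B = "grid_alg D n L f K0 k"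
  have "hpdist (grid_alg D n L f K0 (Suc k)) A \<le> ?r (Suc k) + C * hpdist ?B A"
    using grid_alg_finite_nonempty_in_cube[OF assms(1,2,4,5) K0, where k = k]
    by (simp only: grid_alg.simps, intro hpdist_grid_step_le) (use assms in auto)
  also have "\<dots> \<le> ?r (Suc k) + C * ((\<Sum>j<k. C ^ j * ?r (k - j)) + C ^ k * (D * sqrt (real CARD('m))))"
    using Suc.IH \<open>0 \<le> C\<close> by (intro add_left_mono mult_left_mono)
  also have "\<dots> = (\<Sum>j<Suc k. C ^ j * ?r (Suc k - j)) + C ^ Suc k * (D * sqrt (real CARD('m)))"
    by (subst sum.lessThan_Suc_shift)
      (simp add: sum_distrib_left algebra_simps del: sum.lessThan_Suc)
  finally show ?case .
qed

theorem mainTheorem1: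
  fixes D :: real and L :: nat
    and f :: "nat \<Rightarrow> ('p::finite \<Rightarrow> real^'m) \<Rightarrow> real^'m"
    and n :: "nat \<Rightarrow> nat" and K0 :: "(real^'m) set" and A :: "(real^'m) set"
    and C :: real and k :: nat
  assumes D_pos: "D > 0"
    and L_pos: "L \<ge> 1"
    and p_ge2: "CARD('p) \<ge> 2"
    and f_maps: "\<And>l. l \<in> {1..L} \<Longrightarrow> f l ` tuples (cube D) \<subseteq> cube D"
    and f_lipschitz: "\<And>l. l \<in> {1..L} \<Longrightarrow> \<exists>c. 0 \<le> c \<and>
          (\<forall>u\<in>tuples (cube D). \<forall>v\<in>tuples (cube D). dist (f l u) (f l v) \<le> c * dmax u v)"
    and f_contr: "\<And>l. l \<in> {1..L} \<Longrightarrow> lip (tuples (cube D)) (f l) < 1"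
    and C_def: "C = Max ((\<lambda>l. lip (tuples (cube D)) (f l)) ` {1..L})"
    and A_sub: "A \<subseteq> cube D" and A_ne: "A \<noteq> {}" and A_cpt: "compact A"
    and A_fix: "A = (\<Union>l\<in>{1..L}. f l ` tuples A)"
    and n_pos: "\<And>j. j \<ge> 1 \<Longrightarrow> n j > 0"
    and K0_fin: "finite K0" and K0_ne: "K0 \<noteq> {}" and K0_sub: "K0 \<subseteq> cube D"
    and k_pos: "k \<ge> 1"
  shows "hpdist (grid_alg D n L f K0 k) A
     \<le> (\<Sum>j<k. C ^ j * (D * sqrt (real CARD('m)) / real (n (k - j))))
        + C ^ k * D * sqrt (real CARD('m))"
proof -
  \<comment> \<open>The bound holds for every \<open>C \<ge> 0\<close>.\<close>
  have lip_le_C: "lip (tuples (cube D)) (f l) \<le> C" if "l \<in> {1..L}" for l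
    unfolding C_def using that by (intro Max_ge) auto
  have "0 \<le> C"
    using lip_le_C[of 1] lip_nonneg[OF f_lipschitz, of 1] L_pos by force
  have "dist (f l u) (f l v) \<le> C * dmax u v"
    if "l \<in> {1..L}" "u \<in> tuples (cube D)" "v \<in> tuples (cube D)" for l u v
    using dist_le_lip_dmax[OF f_lipschitz[OF that(1)] that(2,3)] mult_right_mono[OF lip_le_C dmax_nonneg] that
    by (meson order.trans)
  then show ?thesis
    using hpdist_grid_alg_le[OF D_pos L_pos \<open>0 \<le> C\<close> n_pos f_maps _ A_sub A_ne A_cpt A_fix
        K0_fin K0_ne K0_sub, where k = k]
    by (simp add: mult.assoc)
qed

end
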